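(* Let $M$ be a right $R$-module that is principally Goldie*-lifting and distributive. Then $M/\mathrm{Rad}(M)$ is principally semisimple.
   Context: $R$ is an associative ring with identity; modules are unital right $R$-modules; $\mathrm{Rad}(M)$ is the Jacobson radical of $M$. $M$ is distributive if for all submodules $A,B,C$, $A+(B\cap C)=(A+B)\cap(A+C)$. A module is principally semisimple if every cyclic submodule is a direct summand. $K\ll M$ means $K$ is small in $M$. For submodules $X,Y$ of $M$, $X\,\beta^*\,Y$ means $(X+Y)/X\ll M/X$ and $(X+Y)/Y\ll M/Y$. $M$ is principally Goldie*-lifting if for every cyclic submodule $X$ of $M$ there is a direct summand $D$ of $M$ with $X\,\beta^*\,D$. *)

theory Defs
  imports "HOL-Algebra.Algebra"
begin

text \<open>The additive structure of a module is an abelian group given by the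
ring-record fields zero/add (the mult/one fields of the module are irrelevant);
the right scalar action is the extra field rsmult.\<close>

record ('r, 'a) rmodule = "'a ring" +
  rsmult :: "'a \<Rightarrow> 'r \<Rightarrow> 'a"

locale right_module = R: ring R + M: abelian_group M
  for R :: "('r, 'c) ring_scheme" and M :: "('r, 'a, 'd) rmodule_scheme" +
  assumes smult_closed: "\<lbrakk>x \<in> carrier M; r \<in> carrier R\<rbrakk> \<Longrightarrow> rsmult M x r \<in> carrier M"
    and smult_add_left: "\<lbrakk>x \<in> carrier M; y \<in> carrier M; r \<in> carrier R\<rbrakk> \<Longrightarrow>
           rsmult M (ring.add M x y) r = ring.add M (rsmult M x r) (rsmult M y r)"
    and smult_add_right: "\<lbrakk>x \<in> carrier M; r \<in> carrier R; s \<in> carrier R\<rbrakk> \<Longrightarrow>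
           rsmult M x (ring.add R r s) = ring.add M (rsmult M x r) (rsmult M x s)"
    and smult_assoc: "\<lbrakk>x \<in> carrier M; r \<in> carrier R; s \<in> carrier R\<rbrakk> \<Longrightarrow>
           rsmult M x (monoid.mult R r s) = rsmult M (rsmult M x r) s"
    and smult_one: "x \<in> carrier M \<Longrightarrow> rsmult M x (monoid.one R) = x"

definition submod :: "('r, 'c) ring_scheme \<Rightarrow> ('r, 'a, 'd) rmodule_scheme \<Rightarrow> 'a set \<Rightarrow> bool" where
  "submod R M N \<longleftrightarrow> N \<subseteq> carrier M \<and> ring.zero M \<in> N
     \<and> (\<forall>x\<in>N. \<forall>y\<in>N. ring.add M x y \<in> N) \<and> (\<forall>x\<in>N. a_inv M x \<in> N)
     \<and> (\<forall>x\<in>N. \<forall>r\<in>carrier R. rsmult M x r \<in> N)"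

definition msum :: "('r, 'a, 'd) rmodule_scheme \<Rightarrow> 'a set \<Rightarrow> 'a set \<Rightarrow> 'a set" where
  "msum M A B = set_add M A B"

definition cyc :: "('r, 'c) ring_scheme \<Rightarrow> ('r, 'a, 'd) rmodule_scheme \<Rightarrow> 'a \<Rightarrow> 'a set" where
  "cyc R M x = (\<lambda>r. rsmult M x r) ` carrier R"

definition cyclic_submod :: "('r, 'c) ring_scheme \<Rightarrow> ('r, 'a, 'd) rmodule_scheme \<Rightarrow> 'a set \<Rightarrow> bool" where
  "cyclic_submod R M S \<longleftrightarrow> (\<exists>x\<in>carrier M. S = cyc R M x)"

definition direct_summand :: "('r, 'c) ring_scheme \<Rightarrow> ('r, 'a, 'd) rmodule_scheme \<Rightarrow> 'a set \<Rightarrow> bool" where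
  "direct_summand R M D \<longleftrightarrow> submod R M D \<and>
     (\<exists>D'. submod R M D' \<and> msum M D D' = carrier M \<and> D \<inter> D' = {ring.zero M})"

definition small_submod :: "('r, 'c) ring_scheme \<Rightarrow> ('r, 'a, 'd) rmodule_scheme \<Rightarrow> 'a set \<Rightarrow> bool" where
  "small_submod R M K \<longleftrightarrow> submod R M K \<and>
     (\<forall>L. submod R M L \<and> msum M K L = carrier M \<longrightarrow> L = carrier M)"

definition maximal_submod :: "('r, 'c) ring_scheme \<Rightarrow> ('r, 'a, 'd) rmodule_scheme \<Rightarrow> 'a set \<Rightarrow> bool" where
  "maximal_submod R M N \<longleftrightarrow> submod R M N \<and> N \<noteq> carrier M \<and>
     (\<forall>L. submod R M L \<and> N \<subseteq> L \<longrightarrow> L = N \<or> L = carrier M)"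

text \<open>Jacobson radical: intersection of all maximal submodules (M itself if there are none).\<close>
definition Rad :: "('r, 'c) ring_scheme \<Rightarrow> ('r, 'a, 'd) rmodule_scheme \<Rightarrow> 'a set" where
  "Rad R M = carrier M \<inter> \<Inter> {N. maximal_submod R M N}"

text \<open>Quotient module M/N: cosets N + a, with (N + a) r = N + a r.\<close>
definition quot_mod :: "('r, 'c) ring_scheme \<Rightarrow> ('r, 'a, 'd) rmodule_scheme \<Rightarrow> 'a set
    \<Rightarrow> ('r, 'a set) rmodule" where
  "quot_mod R M N = \<lparr>carrier = a_rcosets\<^bsub>M\<^esub> N, monoid.mult = (\<lambda>_ _. undefined), monoid.one = undefined,
     ring.zero = N, ring.add = set_add M,
     rsmult = (\<lambda>C r. set_add M N ((\<lambda>x. rsmult M x r) ` C))\<rparr>"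

definition quot_sub :: "('r, 'a, 'd) rmodule_scheme \<Rightarrow> 'a set \<Rightarrow> 'a set \<Rightarrow> 'a set set" where
  "quot_sub M N A = (\<lambda>a. a_r_coset M N a) ` A"

definition beta_star :: "('r, 'c) ring_scheme \<Rightarrow> ('r, 'a, 'd) rmodule_scheme \<Rightarrow> 'a set \<Rightarrow> 'a set \<Rightarrow> bool" where
  "beta_star R M S T \<longleftrightarrow>
     small_submod R (quot_mod R M S) (quot_sub M S (msum M S T)) \<and>
     small_submod R (quot_mod R M T) (quot_sub M T (msum M S T))"

definition principally_goldie_star_lifting ::
  "('r, 'c) ring_scheme \<Rightarrow> ('r, 'a, 'd) rmodule_scheme \<Rightarrow> bool" where
  "principally_goldie_star_lifting R M \<longleftrightarrow>
     (\<forall>S. cyclic_submod R M S \<longrightarrow> (\<exists>D. direct_summand R M D \<and> beta_star R M S D))"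

definition distributive_mod :: "('r, 'c) ring_scheme \<Rightarrow> ('r, 'a, 'd) rmodule_scheme \<Rightarrow> bool" where
  "distributive_mod R M \<longleftrightarrow>
     (\<forall>A B C. submod R M A \<and> submod R M B \<and> submod R M C \<longrightarrow>
        msum M A (B \<inter> C) = msum M A B \<inter> msum M A C)"

definition principally_semisimple :: "('r, 'c) ring_scheme \<Rightarrow> ('r, 'a, 'd) rmodule_scheme \<Rightarrow> bool" where
  "principally_semisimple R M \<longleftrightarrow> (\<forall>S. cyclic_submod R M S \<longrightarrow> direct_summand R M S)"

end

theory Submission
  imports Defs
begin

(* Let S be a cyclic submodule of M/Rad(M); it is the
   image of a cyclic submodule Y = mR of M.  By the principally Goldie*-lifting property
   there is a decomposition M = D \<oplus> D' with Y \<beta>* D.  The two halves of Y \<beta>* D give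
     (A) Y + D' = M, since (Y+D)/Y is small in M/Y;
     (B) D \<subseteq> Y, by distributivity: D \<subseteq> (Y+D) \<inter> (Y+D') = Y + (D \<inter> D') = Y;
     (C) Y \<inter> D' is small in M, since (Y+D)/D is small in M/D, hence Y \<inter> D' \<subseteq> Rad(M).
   From (B) and (C), Y \<subseteq> D + Rad(M), so S is the image of D in M/Rad(M).  Finally, in a
   distributive module the image of a direct summand D \<oplus> D' = M in any quotient M/N is a
   direct summand, with complement the image of D'. *)

lemma msum_iff: "x \<in> msum M A B \<longleftrightarrow> (\<exists>a\<in>A. \<exists>b\<in>B. x = a \<oplus>\<^bsub>M\<^esub> b)"
  unfolding msum_def set_add_def' by blast

lemma msumI: "a \<in> A \<Longrightarrow> b \<in> B \<Longrightarrow> a \<oplus>\<^bsub>M\<^esub> b \<in> msum M A B"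
  unfolding msum_iff by blast

lemma msumE:
  assumes "x \<in> msum M A B"
  obtains a b where "a \<in> A" "b \<in> B" "x = a \<oplus>\<^bsub>M\<^esub> b"
  using assms unfolding msum_iff by blast

lemma rcos_iff: "x \<in> a_r_coset M N a \<longleftrightarrow> (\<exists>n\<in>N. x = n \<oplus>\<^bsub>M\<^esub> a)"
  unfolding a_r_coset_def' by blast

lemma sub_carrier: "submod R M A \<Longrightarrow> x \<in> A \<Longrightarrow> x \<in> carrier M"
  unfolding submod_def by blast

lemma sub_zero: "submod R M A \<Longrightarrow> \<zero>\<^bsub>M\<^esub> \<in> A"
  unfolding submod_def by blast

lemma sub_add: "submod R M A \<Longrightarrow> x \<in> A \<Longrightarrow> y \<in> A \<Longrightarrow> x \<oplus>\<^bsub>M\<^esub> y \<in> A"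
  unfolding submod_def by blast

lemma sub_neg: "submod R M A \<Longrightarrow> x \<in> A \<Longrightarrow> \<ominus>\<^bsub>M\<^esub> x \<in> A"
  unfolding submod_def by blast

lemma sub_smult: "submod R M A \<Longrightarrow> x \<in> A \<Longrightarrow> r \<in> carrier R \<Longrightarrow> rsmult M x r \<in> A"
  unfolding submod_def by blast

lemma distributive_meet:
  "distributive_mod R M \<Longrightarrow> submod R M A \<Longrightarrow> submod R M B \<Longrightarrow> submod R M C \<Longrightarrow>
   x \<in> msum M A B \<Longrightarrow> x \<in> msum M A C \<Longrightarrow> x \<in> msum M A (B \<inter> C)"
  unfolding distributive_mod_def by blast

context right_module
begin

lemma smult_zeroR:
  assumes x: "x \<in> carrier M"
  shows "rsmult M x \<zero>\<^bsub>R\<^esub> = \<zero>\<^bsub>M\<^esub>"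
proof -
  have c: "rsmult M x \<zero>\<^bsub>R\<^esub> \<in> carrier M" using x smult_closed by simp
  have "rsmult M x \<zero>\<^bsub>R\<^esub> = rsmult M x \<zero>\<^bsub>R\<^esub> \<oplus>\<^bsub>M\<^esub> rsmult M x \<zero>\<^bsub>R\<^esub>"
    using smult_add_right[OF x, of "\<zero>\<^bsub>R\<^esub>" "\<zero>\<^bsub>R\<^esub>"] by simp
  then show ?thesis using c by (metis M.add.l_cancel_one M.zero_closed M.r_zero)
qed

lemma smult_negR:
  assumes x: "x \<in> carrier M" and r: "r \<in> carrier R"
  shows "rsmult M x (\<ominus>\<^bsub>R\<^esub> r) = \<ominus>\<^bsub>M\<^esub> rsmult M x r"
proof -
  have "rsmult M x r \<oplus>\<^bsub>M\<^esub> rsmult M x (\<ominus>\<^bsub>R\<^esub> r) = \<zero>\<^bsub>M\<^esub>"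
    using smult_add_right[OF x r, of "\<ominus>\<^bsub>R\<^esub> r"] r smult_zeroR[OF x] by (simp add: R.r_neg)
  then show ?thesis using x r smult_closed
    by (metis M.add.inv_closed M.minus_equality M.add.m_comm R.a_inv_closed)
qed

text \<open>A submodule is an additive subgroup; this gives access to the coset calculus of
  HOL-Algebra for quotient modules.\<close>

lemma submod_abelian: "submod R M N \<Longrightarrow> abelian_subgroup N M"
  by (intro abelian_subgroupI3 additive_subgroupI M.add.subgroupI)
     (auto simp: submod_def a_inv_def[symmetric] M.abelian_group_axioms)

lemma submod_Int: "submod R M A \<Longrightarrow> submod R M B \<Longrightarrow> submod R M (A \<inter> B)"
  unfolding submod_def by auto

lemma submod_msum:
  assumes A: "submod R M A" and B: "submod R M B"
  shows "submod R M (msum M A B)"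
  unfolding submod_def
proof (intro conjI ballI)
  show "msum M A B \<subseteq> carrier M"
    using sub_carrier[OF A] sub_carrier[OF B] by (auto elim!: msumE)
  have "\<zero>\<^bsub>M\<^esub> \<oplus>\<^bsub>M\<^esub> \<zero>\<^bsub>M\<^esub> \<in> msum M A B" by (rule msumI[OF sub_zero[OF A] sub_zero[OF B]])
  then show "\<zero>\<^bsub>M\<^esub> \<in> msum M A B" by simp
next
  fix x y assume "x \<in> msum M A B" "y \<in> msum M A B"
  then obtain a b a' b' where ab: "a \<in> A" "b \<in> B" "a' \<in> A" "b' \<in> B"
    and xy: "x = a \<oplus>\<^bsub>M\<^esub> b" "y = a' \<oplus>\<^bsub>M\<^esub> b'"
    by (auto elim!: msumE)
  have "x \<oplus>\<^bsub>M\<^esub> y = (a \<oplus>\<^bsub>M\<^esub> a') \<oplus>\<^bsub>M\<^esub> (b \<oplus>\<^bsub>M\<^esub> b')"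
    using xy ab sub_carrier[OF A] sub_carrier[OF B] by (simp add: M.a_ac)
  then show "x \<oplus>\<^bsub>M\<^esub> y \<in> msum M A B" using ab by (simp add: msumI sub_add[OF A] sub_add[OF B])
next
  fix x assume "x \<in> msum M A B"
  then obtain a b where ab: "a \<in> A" "b \<in> B" "x = a \<oplus>\<^bsub>M\<^esub> b" by (rule msumE)
  then have "\<ominus>\<^bsub>M\<^esub> x = \<ominus>\<^bsub>M\<^esub> a \<oplus>\<^bsub>M\<^esub> \<ominus>\<^bsub>M\<^esub> b"
    using sub_carrier[OF A] sub_carrier[OF B] by (simp add: M.minus_add)
  then show "\<ominus>\<^bsub>M\<^esub> x \<in> msum M A B" using ab by (simp add: msumI sub_neg[OF A] sub_neg[OF B])
next
  fix x r assume x: "x \<in> msum M A B" and r: "r \<in> carrier R"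
  from x obtain a b where ab: "a \<in> A" "b \<in> B" "x = a \<oplus>\<^bsub>M\<^esub> b" by (rule msumE)
  then have "rsmult M x r = rsmult M a r \<oplus>\<^bsub>M\<^esub> rsmult M b r"
    using sub_carrier[OF A] sub_carrier[OF B] r by (simp add: smult_add_left)
  then show "rsmult M x r \<in> msum M A B" using ab r by (simp add: msumI sub_smult[OF A] sub_smult[OF B])
qed

lemma msum_incl_left:
  assumes A: "submod R M A" and B: "submod R M B"
  shows "A \<subseteq> msum M A B"
proof
  fix a assume a: "a \<in> A"
  have "a \<oplus>\<^bsub>M\<^esub> \<zero>\<^bsub>M\<^esub> \<in> msum M A B" by (rule msumI[OF a sub_zero[OF B]])
  then show "a \<in> msum M A B" using sub_carrier[OF A a] by simp
qed

lemma msum_incl_right: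
  assumes A: "submod R M A" and B: "submod R M B"
  shows "B \<subseteq> msum M A B"
proof
  fix b assume b: "b \<in> B"
  have "\<zero>\<^bsub>M\<^esub> \<oplus>\<^bsub>M\<^esub> b \<in> msum M A B" by (rule msumI[OF sub_zero[OF A] b])
  then show "b \<in> msum M A B" using sub_carrier[OF B b] by simp
qed

lemma msum_zero_right:
  assumes A: "submod R M A"
  shows "msum M A {\<zero>\<^bsub>M\<^esub>} = A"
proof
  show "msum M A {\<zero>\<^bsub>M\<^esub>} \<subseteq> A" using sub_carrier[OF A] by (auto elim!: msumE)
  show "A \<subseteq> msum M A {\<zero>\<^bsub>M\<^esub>}"
  proof
    fix a assume a: "a \<in> A"
    have "a \<oplus>\<^bsub>M\<^esub> \<zero>\<^bsub>M\<^esub> \<in> msum M A {\<zero>\<^bsub>M\<^esub>}" by (rule msumI[OF a singletonI])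
    then show "a \<in> msum M A {\<zero>\<^bsub>M\<^esub>}" using sub_carrier[OF A a] by simp
  qed
qed

lemma submod_cyc:
  assumes m: "m \<in> carrier M"
  shows "submod R M (cyc R M m)"
  unfolding submod_def cyc_def
proof (intro conjI ballI)
  show "(\<lambda>r. rsmult M m r) ` carrier R \<subseteq> carrier M" using m smult_closed by auto
  show "\<zero>\<^bsub>M\<^esub> \<in> (\<lambda>r. rsmult M m r) ` carrier R"
    using smult_zeroR[OF m] by (metis R.zero_closed image_eqI)
next
  fix x y assume "x \<in> (\<lambda>r. rsmult M m r) ` carrier R" "y \<in> (\<lambda>r. rsmult M m r) ` carrier R"
  then obtain r s where "r \<in> carrier R" "s \<in> carrier R" "x = rsmult M m r" "y = rsmult M m s"
    by auto
  then show "x \<oplus>\<^bsub>M\<^esub> y \<in> (\<lambda>r. rsmult M m r) ` carrier R"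
    using smult_add_right[OF m] by (metis R.add.m_closed image_eqI)
next
  fix x assume "x \<in> (\<lambda>r. rsmult M m r) ` carrier R"
  then obtain r where "r \<in> carrier R" "x = rsmult M m r" by auto
  then show "\<ominus>\<^bsub>M\<^esub> x \<in> (\<lambda>r. rsmult M m r) ` carrier R"
    using smult_negR[OF m] by (metis R.a_inv_closed image_eqI)
next
  fix x s assume "x \<in> (\<lambda>r. rsmult M m r) ` carrier R" "s \<in> carrier R"
  then obtain r where "r \<in> carrier R" "x = rsmult M m r" by auto
  then show "rsmult M x s \<in> (\<lambda>r. rsmult M m r) ` carrier R"
    using smult_assoc[OF m] \<open>s \<in> carrier R\<close> by (metis R.m_closed image_eqI)
qed

lemma submod_Rad: "submod R M (Rad R M)"
  unfolding Rad_def submod_def maximal_submod_def using smult_closed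
  by (auto simp: submod_def)

text \<open>A small submodule lies in every maximal submodule P (otherwise K + P = M forces
  P = M), hence in the radical.\<close>

lemma small_subset_Rad:
  assumes K: "small_submod R M K"
  shows "K \<subseteq> Rad R M"
proof
  fix y assume y: "y \<in> K"
  have sK: "submod R M K" using K unfolding small_submod_def by blast
  have "y \<in> P" if P: "maximal_submod R M P" for P
  proof (rule ccontr)
    assume yP: "y \<notin> P"
    have sP: "submod R M P" using P unfolding maximal_submod_def by blast
    have "P \<subseteq> msum M K P" "y \<in> msum M K P"
      using msum_incl_right[OF sK sP] msum_incl_left[OF sK sP] y by auto
    then have "msum M K P = carrier M"
      using P submod_msum[OF sK sP] yP unfolding maximal_submod_def by blast
    then have "P = carrier M" using K sP unfolding small_submod_def by blast
    then show False using P unfolding maximal_submod_def by blast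
  qed
  then show "y \<in> Rad R M" unfolding Rad_def using sub_carrier[OF sK y] by blast
qed

lemma q_simps:
  "carrier (quot_mod R M N) = a_rcosets\<^bsub>M\<^esub> N"
  "\<zero>\<^bsub>quot_mod R M N\<^esub> = N"
  "add (quot_mod R M N) = set_add M"
  "rsmult (quot_mod R M N) = (\<lambda>C r. set_add M N ((\<lambda>x. rsmult M x r) ` C))"
  unfolding quot_mod_def by simp_all

context
  fixes N assumes N: "submod R M N"
begin

interpretation NS: abelian_subgroup N M using submod_abelian[OF N] .

lemma q_rcos_carrier: "a \<in> carrier M \<Longrightarrow> a_r_coset M N a \<in> carrier (quot_mod R M N)"
  unfolding q_simps using M.a_rcosetsI sub_carrier[OF N] by blast

lemma q_carrier_elem:
  assumes "C \<in> carrier (quot_mod R M N)"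
  obtains a where "a \<in> carrier M" "C = a_r_coset M N a"
  using assms unfolding q_simps A_RCOSETS_def' by blast

lemma q_add: "a \<in> carrier M \<Longrightarrow> b \<in> carrier M \<Longrightarrow>
   add (quot_mod R M N) (a_r_coset M N a) (a_r_coset M N b) = a_r_coset M N (a \<oplus>\<^bsub>M\<^esub> b)"
  unfolding q_simps by (rule NS.a_rcos_sum)

lemma q_eq:
  assumes a: "a \<in> carrier M" and b: "b \<in> carrier M"
  shows "a_r_coset M N a = a_r_coset M N b \<longleftrightarrow> a \<oplus>\<^bsub>M\<^esub> \<ominus>\<^bsub>M\<^esub> b \<in> N"
proof
  assume "a_r_coset M N a = a_r_coset M N b"
  then have "a \<in> a_r_coset M N b" using NS.a_rcos_self[OF a] by simp
  then show "a \<oplus>\<^bsub>M\<^esub> \<ominus>\<^bsub>M\<^esub> b \<in> N" using NS.a_rcos_module_imp[OF b] by blast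
next
  assume "a \<oplus>\<^bsub>M\<^esub> \<ominus>\<^bsub>M\<^esub> b \<in> N"
  then have "a \<in> a_r_coset M N b" by (rule NS.a_rcos_module_rev[OF b a])
  then show "a_r_coset M N a = a_r_coset M N b" using NS.a_repr_independence'[OF _ b] by simp
qed

lemma q_smult:
  assumes a: "a \<in> carrier M" and r: "r \<in> carrier R"
  shows "rsmult (quot_mod R M N) (a_r_coset M N a) r = a_r_coset M N (rsmult M a r)"
proof -
  have "x \<in> set_add M N ((\<lambda>x. rsmult M x r) ` a_r_coset M N a)
        \<longleftrightarrow> x \<in> a_r_coset M N (rsmult M a r)" for x
  proof
    assume "x \<in> set_add M N ((\<lambda>x. rsmult M x r) ` a_r_coset M N a)"
    then obtain n y where n: "n \<in> N" and y: "y \<in> (\<lambda>x. rsmult M x r) ` a_r_coset M N a"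
      and xy: "x = n \<oplus>\<^bsub>M\<^esub> y"
      unfolding msum_def[symmetric] by (rule msumE)
    from y obtain z where z: "z \<in> a_r_coset M N a" and x: "x = n \<oplus>\<^bsub>M\<^esub> rsmult M z r"
      using xy by blast
    obtain n' where n': "n' \<in> N" "z = n' \<oplus>\<^bsub>M\<^esub> a" using z unfolding rcos_iff by blast
    have "x = (n \<oplus>\<^bsub>M\<^esub> rsmult M n' r) \<oplus>\<^bsub>M\<^esub> rsmult M a r"
      using x n n' a r sub_carrier[OF N] by (simp add: smult_add_left smult_closed M.a_assoc)
    moreover have "n \<oplus>\<^bsub>M\<^esub> rsmult M n' r \<in> N" using sub_add[OF N n sub_smult[OF N n'(1) r]] .
    ultimately show "x \<in> a_r_coset M N (rsmult M a r)" unfolding rcos_iff by blast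
  next
    assume "x \<in> a_r_coset M N (rsmult M a r)"
    then obtain n where n: "n \<in> N" and x: "x = n \<oplus>\<^bsub>M\<^esub> rsmult M a r"
      unfolding rcos_iff by blast
    have "rsmult M a r \<in> (\<lambda>x. rsmult M x r) ` a_r_coset M N a"
      using NS.a_rcos_self[OF a] by (rule imageI)
    then have "n \<oplus>\<^bsub>M\<^esub> rsmult M a r \<in> msum M N ((\<lambda>x. rsmult M x r) ` a_r_coset M N a)"
      by (rule msumI[OF n])
    then show "x \<in> set_add M N ((\<lambda>x. rsmult M x r) ` a_r_coset M N a)"
      unfolding msum_def x .
  qed
  then show ?thesis unfolding q_simps by auto
qed

lemma q_neg:
  assumes a: "a \<in> carrier M"
  shows "a_inv (quot_mod R M N) (a_r_coset M N a) = a_r_coset M N (\<ominus>\<^bsub>M\<^esub> a)"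
  unfolding a_inv_def[of "quot_mod R M N"] m_inv_def
proof (rule the_equality, goal_cases)
  case 1
  have na: "\<ominus>\<^bsub>M\<^esub> a \<in> carrier M" using a by simp
  have "a_r_coset M N a <+>\<^bsub>M\<^esub> a_r_coset M N (\<ominus>\<^bsub>M\<^esub> a) = N"
       "a_r_coset M N (\<ominus>\<^bsub>M\<^esub> a) <+>\<^bsub>M\<^esub> a_r_coset M N a = N"
    using NS.a_rcos_sum[OF a na] NS.a_rcos_sum[OF na a] a NS.a_rcos_const[OF sub_zero[OF N]]
    by (simp_all add: M.r_neg M.l_neg)
  then show ?case using q_rcos_carrier[OF na] by (simp add: q_simps)
next
  case (2 y)
  then have yc: "y \<in> carrier (quot_mod R M N)" and ye: "a_r_coset M N a <+>\<^bsub>M\<^esub> y = N"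
    by (simp_all add: q_simps)
  obtain b where b: "b \<in> carrier M" and yb: "y = a_r_coset M N b" using q_carrier_elem[OF yc] .
  have "a_r_coset M N (a \<oplus>\<^bsub>M\<^esub> b) = N" using ye yb NS.a_rcos_sum[OF a b] by simp
  then have "a \<oplus>\<^bsub>M\<^esub> b \<in> N" using NS.a_rcos_self[of "a \<oplus>\<^bsub>M\<^esub> b"] a b by simp
  then have "b \<oplus>\<^bsub>M\<^esub> \<ominus>\<^bsub>M\<^esub> (\<ominus>\<^bsub>M\<^esub> a) \<in> N" using a b by (simp add: M.a_comm)
  then show "y = a_r_coset M N (\<ominus>\<^bsub>M\<^esub> a)" using q_eq[OF b] a yb by simp
qed

lemma submod_quot_sub:
  assumes L: "submod R M L"
  shows "submod R (quot_mod R M N) (quot_sub M N L)"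
  unfolding submod_def quot_sub_def
proof (intro conjI ballI)
  show "a_r_coset M N ` L \<subseteq> carrier (quot_mod R M N)"
    using q_rcos_carrier sub_carrier[OF L] by blast
  show "\<zero>\<^bsub>quot_mod R M N\<^esub> \<in> a_r_coset M N ` L"
    using NS.a_rcos_const[OF sub_zero[OF N]] sub_zero[OF L] unfolding q_simps by (metis image_eqI)
next
  fix x y assume "x \<in> a_r_coset M N ` L" "y \<in> a_r_coset M N ` L"
  then obtain a b where ab: "a \<in> L" "b \<in> L" "x = a_r_coset M N a" "y = a_r_coset M N b"
    by blast
  then have "x \<oplus>\<^bsub>quot_mod R M N\<^esub> y = a_r_coset M N (a \<oplus>\<^bsub>M\<^esub> b)"
    using q_add sub_carrier[OF L] by simp
  then show "x \<oplus>\<^bsub>quot_mod R M N\<^esub> y \<in> a_r_coset M N ` L" using sub_add[OF L ab(1,2)] by blast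
next
  fix x assume "x \<in> a_r_coset M N ` L"
  then obtain a where a: "a \<in> L" "x = a_r_coset M N a" by blast
  then have "\<ominus>\<^bsub>quot_mod R M N\<^esub> x = a_r_coset M N (\<ominus>\<^bsub>M\<^esub> a)"
    using q_neg sub_carrier[OF L] by simp
  then show "\<ominus>\<^bsub>quot_mod R M N\<^esub> x \<in> a_r_coset M N ` L" using sub_neg[OF L a(1)] by blast
next
  fix x r assume "x \<in> a_r_coset M N ` L" and r: "r \<in> carrier R"
  then obtain a where a: "a \<in> L" "x = a_r_coset M N a" by blast
  then have "rsmult (quot_mod R M N) x r = a_r_coset M N (rsmult M a r)"
    using q_smult sub_carrier[OF L] r by simp
  then show "rsmult (quot_mod R M N) x r \<in> a_r_coset M N ` L" using sub_smult[OF L a(1) r] by blast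
qed

lemma cyclic_quot_sub:
  assumes "cyclic_submod R (quot_mod R M N) S"
  obtains m where "m \<in> carrier M" "S = quot_sub M N (cyc R M m)"
proof -
  obtain C where C: "C \<in> carrier (quot_mod R M N)" and SC: "S = cyc R (quot_mod R M N) C"
    using assms unfolding cyclic_submod_def by blast
  obtain m where m: "m \<in> carrier M" and Cm: "C = a_r_coset M N m" using q_carrier_elem[OF C] .
  have "S = quot_sub M N (cyc R M m)"
    unfolding SC cyc_def quot_sub_def Cm image_image using q_smult[OF m] by (intro image_cong) auto
  with m show thesis by (rule that)
qed

lemma msum_quot:
  assumes K: "K \<subseteq> carrier M" and L: "L \<subseteq> carrier M" and KL: "msum M K L = carrier M"
  shows "msum (quot_mod R M N) (quot_sub M N K) (quot_sub M N L) = carrier (quot_mod R M N)"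
proof
  show "msum (quot_mod R M N) (quot_sub M N K) (quot_sub M N L) \<subseteq> carrier (quot_mod R M N)"
    using q_add q_rcos_carrier K L by (auto simp: quot_sub_def subset_iff elim!: msumE)
next
  show "carrier (quot_mod R M N) \<subseteq> msum (quot_mod R M N) (quot_sub M N K) (quot_sub M N L)"
  proof
    fix C assume "C \<in> carrier (quot_mod R M N)"
    then obtain x where x: "x \<in> carrier M" "C = a_r_coset M N x" by (rule q_carrier_elem)
    from x(1) KL have "x \<in> msum M K L" by simp
    then obtain k l where kl: "k \<in> K" "l \<in> L" "x = k \<oplus>\<^bsub>M\<^esub> l" by (rule msumE)
    then have "C = add (quot_mod R M N) (a_r_coset M N k) (a_r_coset M N l)"
      using q_add x K L by (simp add: subset_iff)
    then show "C \<in> msum (quot_mod R M N) (quot_sub M N K) (quot_sub M N L)"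
      unfolding quot_sub_def using kl by (blast intro: msumI)
  qed
qed

lemma small_quot:
  assumes sm: "small_submod R (quot_mod R M N) (quot_sub M N K)" and K: "K \<subseteq> carrier M"
    and L: "submod R M L" and NL: "N \<subseteq> L" and KL: "msum M K L = carrier M"
  shows "L = carrier M"
proof
  show "L \<subseteq> carrier M" using sub_carrier[OF L] by blast
next
  have LN: "quot_sub M N L = carrier (quot_mod R M N)"
    using sm submod_quot_sub[OF L] msum_quot[OF K _ KL] sub_carrier[OF L]
    unfolding small_submod_def by blast
  show "carrier M \<subseteq> L"
  proof
    fix x assume x: "x \<in> carrier M"
    then have "a_r_coset M N x \<in> quot_sub M N L" using LN q_rcos_carrier by simp
    then obtain l where l: "l \<in> L" "a_r_coset M N x = a_r_coset M N l"
      unfolding quot_sub_def by blast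
    have lc: "l \<in> carrier M" using sub_carrier[OF L l(1)] .
    then have "x \<oplus>\<^bsub>M\<^esub> \<ominus>\<^bsub>M\<^esub> l \<in> L" using q_eq[OF x lc] l NL by blast
    then have "(x \<oplus>\<^bsub>M\<^esub> \<ominus>\<^bsub>M\<^esub> l) \<oplus>\<^bsub>M\<^esub> l \<in> L" using sub_add[OF L _ l(1)] by blast
    then show "x \<in> L" using x lc by (simp add: M.a_assoc M.l_neg)
  qed
qed


text \<open>In a distributive module the image of a decomposition M = D \<oplus> D' in M/N is again a
  decomposition: if d + N = d' + N then d \<in> (N + D) \<inter> (N + D') = N + (D \<inter> D') = N.\<close>

lemma quot_sub_direct_summand:
  assumes DI: "distributive_mod R M" and D: "submod R M D" and D': "submod R M D'"
    and DD': "msum M D D' = carrier M" and DiD': "D \<inter> D' = {\<zero>\<^bsub>M\<^esub>}"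
  shows "direct_summand R (quot_mod R M N) (quot_sub M N D)"
  unfolding direct_summand_def
proof (intro conjI exI)
  show "submod R (quot_mod R M N) (quot_sub M N D)" by (rule submod_quot_sub[OF D])
  show "submod R (quot_mod R M N) (quot_sub M N D')" by (rule submod_quot_sub[OF D'])
  show "msum (quot_mod R M N) (quot_sub M N D) (quot_sub M N D') = carrier (quot_mod R M N)"
    using msum_quot[OF _ _ DD'] sub_carrier[OF D] sub_carrier[OF D'] by blast
  show "quot_sub M N D \<inter> quot_sub M N D' = {\<zero>\<^bsub>quot_mod R M N\<^esub>}"
  proof
    show "{\<zero>\<^bsub>quot_mod R M N\<^esub>} \<subseteq> quot_sub M N D \<inter> quot_sub M N D'"
      using NS.a_rcos_const[OF sub_zero[OF N]] sub_zero[OF D] sub_zero[OF D']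
      unfolding quot_sub_def q_simps by force
  next
    show "quot_sub M N D \<inter> quot_sub M N D' \<subseteq> {\<zero>\<^bsub>quot_mod R M N\<^esub>}"
    proof
      fix c assume "c \<in> quot_sub M N D \<inter> quot_sub M N D'"
      then obtain d d' where d: "d \<in> D" "d' \<in> D'" "c = a_r_coset M N d" "c = a_r_coset M N d'"
        unfolding quot_sub_def by blast
      have dc: "d \<in> carrier M" using sub_carrier[OF D d(1)] .
      have d'c: "d' \<in> carrier M" using sub_carrier[OF D' d(2)] .
      have n: "d \<oplus>\<^bsub>M\<^esub> \<ominus>\<^bsub>M\<^esub> d' \<in> N" using q_eq[OF dc d'c] d by simp
      have in_ND: "d \<in> msum M N D" using msum_incl_right[OF N D] d(1) by blast
      have "(d \<oplus>\<^bsub>M\<^esub> \<ominus>\<^bsub>M\<^esub> d') \<oplus>\<^bsub>M\<^esub> d' \<in> msum M N D'" by (rule msumI[OF n d(2)])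
      then have in_ND': "d \<in> msum M N D'" using dc d'c by (simp add: M.a_assoc M.l_neg)
      have "d \<in> msum M N (D \<inter> D')" by (rule distributive_meet[OF DI N D D' in_ND in_ND'])
      then have "d \<in> N" using DiD' msum_zero_right[OF N] by simp
      then show "c \<in> {\<zero>\<^bsub>quot_mod R M N\<^esub>}" using d(3) NS.a_rcos_const by (simp add: q_simps)
    qed
  qed
qed

text \<open>If D \<subseteq> Y \<subseteq> M = D \<oplus> D' and Y \<inter> D' \<subseteq> N, then Y = D + (Y \<inter> D') has the same image in
  M/N as D.\<close>

lemma quot_sub_eq_summand:
  assumes Y: "submod R M Y" and D: "submod R M D" and D': "submod R M D'"
    and DD': "msum M D D' = carrier M" and DY: "D \<subseteq> Y" and YD'N: "Y \<inter> D' \<subseteq> N"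
  shows "quot_sub M N Y = quot_sub M N D"
proof
  show "quot_sub M N D \<subseteq> quot_sub M N Y" using DY unfolding quot_sub_def by blast
  show "quot_sub M N Y \<subseteq> quot_sub M N D"
  proof
    fix c assume "c \<in> quot_sub M N Y"
    then obtain x where x: "x \<in> Y" "c = a_r_coset M N x" unfolding quot_sub_def by blast
    have xc: "x \<in> carrier M" using sub_carrier[OF Y x(1)] .
    with DD' have "x \<in> msum M D D'" by simp
    then obtain d d' where d: "d \<in> D" "d' \<in> D'" "x = d \<oplus>\<^bsub>M\<^esub> d'" by (rule msumE)
    have dc: "d \<in> carrier M" using sub_carrier[OF D d(1)] .
    have d'c: "d' \<in> carrier M" using sub_carrier[OF D' d(2)] .
    have e: "x \<oplus>\<^bsub>M\<^esub> \<ominus>\<^bsub>M\<^esub> d = d'" using d(3) dc d'c by (simp add: M.a_ac M.r_neg)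
    have "x \<oplus>\<^bsub>M\<^esub> \<ominus>\<^bsub>M\<^esub> d \<in> Y" using sub_add[OF Y x(1) sub_neg[OF Y subsetD[OF DY d(1)]]] .
    then have "x \<oplus>\<^bsub>M\<^esub> \<ominus>\<^bsub>M\<^esub> d \<in> N" using YD'N d(2) e by blast
    then have "a_r_coset M N x = a_r_coset M N d" using q_eq[OF xc dc] by simp
    then show "c \<in> quot_sub M N D" using x d(1) unfolding quot_sub_def by blast
  qed
qed

end

lemma msum_mono: "A \<subseteq> A' \<Longrightarrow> B \<subseteq> B' \<Longrightarrow> msum M A B \<subseteq> msum M A' B'"
  unfolding subset_iff msum_iff by blast

text \<open>First half of Y \<beta>* D, namely (Y+D)/Y \<ll> M/Y, for a decomposition M = D \<oplus> D':
  since (Y+D) + (Y+D') = M and Y \<subseteq> Y + D', smallness forces Y + D' = M.\<close>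

lemma beta_star_complement:
  assumes Y: "submod R M Y" and D: "submod R M D" and D': "submod R M D'"
    and DD': "msum M D D' = carrier M"
    and sm: "small_submod R (quot_mod R M Y) (quot_sub M Y (msum M Y D))"
  shows "msum M Y D' = carrier M"
proof (rule small_quot[OF Y sm _ submod_msum[OF Y D'] msum_incl_left[OF Y D']])
  show "msum M Y D \<subseteq> carrier M" using sub_carrier[OF submod_msum[OF Y D]] by blast
  show "msum M (msum M Y D) (msum M Y D') = carrier M"
  proof
    show "msum M (msum M Y D) (msum M Y D') \<subseteq> carrier M"
      using sub_carrier[OF submod_msum[OF submod_msum[OF Y D] submod_msum[OF Y D']]] by blast
    show "carrier M \<subseteq> msum M (msum M Y D) (msum M Y D')"
      using msum_mono[OF msum_incl_right[OF Y D] msum_incl_right[OF Y D']] DD' by simp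
  qed
qed

text \<open>Distributivity turns Y + D' = M into D \<subseteq> Y:
  D \<subseteq> (Y + D) \<inter> (Y + D') = Y + (D \<inter> D') = Y.\<close>

lemma summand_subset:
  assumes DI: "distributive_mod R M" and Y: "submod R M Y" and D: "submod R M D"
    and D': "submod R M D'" and DiD': "D \<inter> D' = {\<zero>\<^bsub>M\<^esub>}" and YD': "msum M Y D' = carrier M"
  shows "D \<subseteq> Y"
proof
  fix d assume d: "d \<in> D"
  have in_YD: "d \<in> msum M Y D" using msum_incl_right[OF Y D] d by blast
  have in_YD': "d \<in> msum M Y D'" using YD' sub_carrier[OF D d] by simp
  have "d \<in> msum M Y (D \<inter> D')" by (rule distributive_meet[OF DI Y D D' in_YD in_YD'])
  then show "d \<in> Y" using DiD' msum_zero_right[OF Y] by simp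
qed

text \<open>If M = D \<oplus> D' and (Y \<inter> D') + L = M, then every z = d + k + l (d \<in> D, k \<in> Y \<inter> D',
  l \<in> L) has l = z' - k \<in> L \<inter> D' for the D'-component z', so (Y + D) + (D + (L \<inter> D')) = M.\<close>

lemma meet_cover:
  assumes Y: "submod R M Y" and D: "submod R M D" and D': "submod R M D'" and L: "submod R M L"
    and DD': "msum M D D' = carrier M" and KL: "msum M (Y \<inter> D') L = carrier M"
  shows "msum M (msum M Y D) (msum M D (L \<inter> D')) = carrier M"
proof
  show "msum M (msum M Y D) (msum M D (L \<inter> D')) \<subseteq> carrier M"
    using sub_carrier[OF submod_msum[OF submod_msum[OF Y D] submod_msum[OF D submod_Int[OF L D']]]]
    by blast
  show "carrier M \<subseteq> msum M (msum M Y D) (msum M D (L \<inter> D'))"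
  proof
    fix z assume "z \<in> carrier M"
    with DD' have "z \<in> msum M D D'" by simp
    then obtain d e where d: "d \<in> D" and e: "e \<in> D'" and z: "z = d \<oplus>\<^bsub>M\<^esub> e" by (rule msumE)
    from KL sub_carrier[OF D' e] have "e \<in> msum M (Y \<inter> D') L" by simp
    then obtain k l where k: "k \<in> Y \<inter> D'" and l: "l \<in> L" and ekl: "e = k \<oplus>\<^bsub>M\<^esub> l" by (rule msumE)
    have kc: "k \<in> carrier M" and lc: "l \<in> carrier M" and dc: "d \<in> carrier M"
      using sub_carrier[OF Y] sub_carrier[OF L l] sub_carrier[OF D d] k by auto
    have "l = \<ominus>\<^bsub>M\<^esub> k \<oplus>\<^bsub>M\<^esub> e" using ekl kc lc by (simp add: M.a_assoc[symmetric] M.l_neg)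
    then have "l \<in> L \<inter> D'" using l sub_add[OF D' sub_neg[OF D'] e] k by auto
    then have "(k \<oplus>\<^bsub>M\<^esub> d) \<oplus>\<^bsub>M\<^esub> (\<zero>\<^bsub>M\<^esub> \<oplus>\<^bsub>M\<^esub> l) \<in> msum M (msum M Y D) (msum M D (L \<inter> D'))"
      using k by (intro msumI d sub_zero[OF D]) auto
    moreover have "(k \<oplus>\<^bsub>M\<^esub> d) \<oplus>\<^bsub>M\<^esub> (\<zero>\<^bsub>M\<^esub> \<oplus>\<^bsub>M\<^esub> l) = z"
      using z ekl kc lc dc by (simp add: M.a_ac)
    ultimately show "z \<in> msum M (msum M Y D) (msum M D (L \<inter> D'))" by simp
  qed
qed

text \<open>If M = D \<oplus> D' and D + L = M for some L \<subseteq> D', then L = D' (modular law).\<close>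

lemma complement_inside:
  assumes D: "submod R M D" and D': "submod R M D'" and L: "submod R M L"
    and DiD': "D \<inter> D' = {\<zero>\<^bsub>M\<^esub>}" and DL: "msum M D L = carrier M" and LD': "L \<subseteq> D'"
  shows "D' \<subseteq> L"
proof
  fix e assume e: "e \<in> D'"
  from DL sub_carrier[OF D' e] have "e \<in> msum M D L" by simp
  then obtain d l where d: "d \<in> D" and l: "l \<in> L" and edl: "e = d \<oplus>\<^bsub>M\<^esub> l" by (rule msumE)
  have dc: "d \<in> carrier M" and lc: "l \<in> carrier M" using sub_carrier[OF D d] sub_carrier[OF L l] .
  have "d = e \<oplus>\<^bsub>M\<^esub> \<ominus>\<^bsub>M\<^esub> l" using edl dc lc by (simp add: M.a_assoc M.r_neg)
  then have "d \<in> D'" using sub_add[OF D' e sub_neg[OF D' subsetD[OF LD' l]]] by simp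
  then have "d = \<zero>\<^bsub>M\<^esub>" using DiD' d by blast
  then show "e \<in> L" using edl lc l by simp
qed

text \<open>Second half of Y \<beta>* D, namely (Y+D)/D \<ll> M/D, makes Y \<inter> D' small in M: if
  (Y \<inter> D') + L = M, then D + (L \<inter> D') = M by smallness, so D' \<subseteq> L and hence L = M.\<close>

lemma beta_star_meet_small:
  assumes Y: "submod R M Y" and D: "submod R M D" and D': "submod R M D'"
    and DD': "msum M D D' = carrier M" and DiD': "D \<inter> D' = {\<zero>\<^bsub>M\<^esub>}"
    and sm: "small_submod R (quot_mod R M D) (quot_sub M D (msum M Y D))"
  shows "small_submod R M (Y \<inter> D')"
  unfolding small_submod_def
proof (intro conjI allI impI)
  show K: "submod R M (Y \<inter> D')" by (rule submod_Int[OF Y D'])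
  fix L assume "submod R M L \<and> msum M (Y \<inter> D') L = carrier M"
  then have L: "submod R M L" and KL: "msum M (Y \<inter> D') L = carrier M" by auto
  have L': "submod R M (L \<inter> D')" by (rule submod_Int[OF L D'])
  have YDc: "msum M Y D \<subseteq> carrier M" using sub_carrier[OF submod_msum[OF Y D]] by blast
  have "msum M D (L \<inter> D') = carrier M"
    by (rule small_quot[OF D sm YDc submod_msum[OF D L'] msum_incl_left[OF D L']
          meet_cover[OF Y D D' L DD' KL]])
  then have D'L: "D' \<subseteq> L" using complement_inside[OF D D' L' DiD'] by blast
  show "L = carrier M"
  proof
    show "L \<subseteq> carrier M" using sub_carrier[OF L] by blast
    show "carrier M \<subseteq> L"
    proof
      fix z assume "z \<in> carrier M"
      with KL have "z \<in> msum M (Y \<inter> D') L" by simp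
      then obtain k l where "k \<in> Y \<inter> D'" "l \<in> L" "z = k \<oplus>\<^bsub>M\<^esub> l" by (rule msumE)
      then show "z \<in> L" using sub_add[OF L] D'L by blast
    qed
  qed
qed

text \<open>The consequence of Y \<beta>* D for a direct summand D of a distributive module: D \<subseteq> Y and
  Y \<inter> D' \<subseteq> Rad(M), so Y and D have the same image in M/Rad(M).\<close>

lemma beta_star_quot_Rad:
  assumes DI: "distributive_mod R M" and Y: "submod R M Y" and D: "submod R M D"
    and D': "submod R M D'" and DD': "msum M D D' = carrier M" and DiD': "D \<inter> D' = {\<zero>\<^bsub>M\<^esub>}"
    and bs: "beta_star R M Y D"
  shows "quot_sub M (Rad R M) Y = quot_sub M (Rad R M) D"
proof -
  have sm1: "small_submod R (quot_mod R M Y) (quot_sub M Y (msum M Y D))"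
    and sm2: "small_submod R (quot_mod R M D) (quot_sub M D (msum M Y D))"
    using bs unfolding beta_star_def by auto
  have "D \<subseteq> Y"
    using summand_subset[OF DI Y D D' DiD' beta_star_complement[OF Y D D' DD' sm1]] .
  moreover have "Y \<inter> D' \<subseteq> Rad R M"
    using small_subset_Rad[OF beta_star_meet_small[OF Y D D' DD' DiD' sm2]] .
  ultimately show ?thesis by (rule quot_sub_eq_summand[OF submod_Rad Y D D' DD'])
qed

end

theorem proposition3p13:
  fixes R :: "('r, 'c) ring_scheme" and M :: "('r, 'a, 'd) rmodule_scheme"
  assumes "right_module R M"
    and "principally_goldie_star_lifting R M"
    and "distributive_mod R M"
  shows "principally_semisimple R (quot_mod R M (Rad R M))"
proof -
  interpret right_module R M by (rule assms(1))
  have "direct_summand R (quot_mod R M (Rad R M)) S"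
    if S: "cyclic_submod R (quot_mod R M (Rad R M)) S" for S
  proof -
    obtain m where m: "m \<in> carrier M" and S_eq: "S = quot_sub M (Rad R M) (cyc R M m)"
      by (rule cyclic_quot_sub[OF submod_Rad S])
    have "cyclic_submod R M (cyc R M m)" unfolding cyclic_submod_def using m by blast
    then obtain D where "direct_summand R M D" and bs: "beta_star R M (cyc R M m) D"
      using assms(2) unfolding principally_goldie_star_lifting_def by blast
    then obtain D' where D: "submod R M D" and D': "submod R M D'"
      and DD': "msum M D D' = carrier M" and DiD': "D \<inter> D' = {\<zero>\<^bsub>M\<^esub>}"
      unfolding direct_summand_def by blast
    have "S = quot_sub M (Rad R M) D"
      using S_eq beta_star_quot_Rad[OF assms(3) submod_cyc[OF m] D D' DD' DiD' bs] by simp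
    then show ?thesis using quot_sub_direct_summand[OF submod_Rad assms(3) D D' DD' DiD'] by simp
  qed
  then show ?thesis unfolding principally_semisimple_def by blast
qed

end
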